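(* Let $n\ge1$. On the class $\mathcal S_n\setminus\{\mathbb R^n,\emptyset\}$, the map $K\mapsto K^c$ is an isometry with respect to the Hausdorff distance, i.e. $d_H(K^c,L^c)=d_H(K,L)$ for all $K,L\in\mathcal S_n\setminus\{\mathbb R^n,\emptyset\}$.
   Context: $B(x,r)$ is the closed Euclidean ball and $B=B(0,1)$. For $A\subseteq\mathbb R^n$, $A^c=\bigcap_{x\in A}B(x,1)$. $\mathcal S_n$ is the class of all sets of the form $\bigcap_{x\in A}B(x,1)$, $A\subseteq\mathbb R^n$. The Hausdorff distance of compact convex sets $K,L$ is $d_H(K,L)=\inf\{\lambda\ge0:K\subseteq L+\lambda B,\ L\subseteq K+\lambda B\}=\sup_{u\in S^{n-1}}|h_K(u)-h_L(u)|$, where $h_K$ is the support function. *)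

theory Defs
  imports "HOL-Analysis.Analysis"
begin

definition ball_dual :: "'a::euclidean_space set \<Rightarrow> 'a set" where
  "ball_dual A = (\<Inter>x\<in>A. cball x 1)"

definition spindle_class :: "'a::euclidean_space set set" where
  "spindle_class = {ball_dual A | A. True}"

definition hausdorff_dist :: "'a::euclidean_space set \<Rightarrow> 'a set \<Rightarrow> real" where
  "hausdorff_dist K L = Inf {r. r \<ge> 0 \<and>
      K \<subseteq> {y + v | y v. y \<in> L \<and> v \<in> cball 0 r} \<and>
      L \<subseteq> {y + v | y v. y \<in> K \<and> v \<in> cball 0 r}}"

end

theory Submission
  imports Defs
begin

text \<open>The map K \<mapsto> K^c reverses inclusions and is an involution on spindle_class, so it
  suffices to show that K \<subseteq> L + rB implies L^c \<subseteq> K^c + rB. For x \<in> L^c we have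
  K \<subseteq> B(x, 1 + r), and we need a point of K^c within distance r of x. Let z be the point of
  the closed convex set K^c nearest to x and u the unit outer normal there. Every point
  of K^c lies in the unit ball B(z - u, 1): otherwise the spindle of z and that point, which
  lies in K^c, would cross the supporting hyperplane at z. Hence z - u \<in> K^cc = K, and
  so dist x z + 1 = dist x (z - u) \<le> 1 + r.\<close>

lemma mem_ball_dual: "x \<in> ball_dual A \<longleftrightarrow> (\<forall>a\<in>A. dist a x \<le> 1)"
  unfolding ball_dual_def by auto

lemma closed_ball_dual: "closed (ball_dual A)"
  unfolding ball_dual_def by (auto intro!: closed_INT)

lemma convex_ball_dual: "convex (ball_dual A)"
  unfolding ball_dual_def by (auto intro!: convex_INT)

lemma subset_ball_dual_ball_dual: "A \<subseteq> ball_dual (ball_dual A)"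
  by (auto simp: mem_ball_dual) (metis dist_commute)

lemma ball_dual_antimono: "A \<subseteq> B \<Longrightarrow> ball_dual B \<subseteq> ball_dual A"
  unfolding ball_dual_def by auto

lemma ball_dual_in_spindle_class: "ball_dual A \<in> spindle_class"
  unfolding spindle_class_def by blast

lemma ball_dual_ball_dual_eq:
  assumes "K \<in> spindle_class"
  shows "ball_dual (ball_dual K) = K"
proof -
  obtain A where "K = ball_dual A" using assms unfolding spindle_class_def by blast
  then show ?thesis
    by (metis ball_dual_antimono subset_ball_dual_ball_dual subset_antisym)
qed

lemma ball_dual_eq_UNIV_iff: "ball_dual A = UNIV \<longleftrightarrow> A = {}"
proof
  assume "ball_dual A = UNIV"
  moreover have "ball_dual A \<subseteq> cball a 1" if "a \<in> A" for a
    using that unfolding ball_dual_def by blast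
  ultimately show "A = {}" by (metis bounded_cball bounded_subset equals0I not_bounded_UNIV)
qed (simp add: ball_dual_def)

lemma ball_dual_nonempty:
  assumes "K \<in> spindle_class" "K \<noteq> UNIV"
  shows "ball_dual K \<noteq> {}"
proof -
  obtain A where "K = ball_dual A" using assms(1) unfolding spindle_class_def by blast
  with assms(2) have "A \<noteq> {}" by (simp add: ball_dual_eq_UNIV_iff)
  with \<open>K = ball_dual A\<close> show ?thesis using subset_ball_dual_ball_dual by blast
qed

text \<open>Near the vertex 0, the spindle of 0 and e (the intersection of all unit balls
  containing both) contains the segments in the directions (2 / norm e ^ 2) e + w, norm w < 1.\<close>

lemma unit_cball_contains_spindle_direction:
  fixes e w r :: "'a::real_inner"
  defines "v \<equiv> (2 / norm e ^ 2) *\<^sub>R e + w"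
  assumes "0 \<in> cball r 1" "e \<in> cball r 1" "norm w \<le> 1"
    and "0 \<le> t" "2 * t \<le> norm e ^ 2" "t * norm v ^ 2 \<le> 2 * (1 - norm w)"
  shows "t *\<^sub>R v \<in> cball r 1"
proof (cases "e = 0")
  case True
  with assms show ?thesis by simp
next
  case False
  define E R where "E = norm e ^ 2" and "R = norm r ^ 2"
  have "E > 0" using False by (simp add: E_def)
  have "R \<le> 1" using assms(2) by (simp add: R_def power_le_one)
  have "norm (e - r) ^ 2 \<le> 1" using assms(3) by (simp add: dist_norm norm_minus_commute power_le_one)
  then have er: "E + R - 1 \<le> 2 * inner e r"
    by (simp add: E_def R_def power2_norm_eq_inner inner_diff inner_commute)
  have "- inner w r \<le> norm w * norm r" using norm_cauchy_schwarz[of w "- r"] by simp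
  also have "\<dots> \<le> norm w" using assms(2) by (simp add: mult_left_le)
  finally have wr: "- inner w r \<le> norm w" .
  have "norm (t *\<^sub>R v - r) ^ 2 = t\<^sup>2 * norm v ^ 2 - 2 * t * inner v r + R"
    unfolding R_def power2_norm_eq_inner
    by (simp add: inner_diff inner_commute algebra_simps power2_eq_square)
  also have "\<dots> = t\<^sup>2 * norm v ^ 2 - 2 * t * ((2 / E) * inner e r + inner w r) + R"
    by (simp add: v_def E_def inner_add_left)
  also have "\<dots> \<le> t\<^sup>2 * norm v ^ 2 - (2 * t / E) * (E + R - 1) + 2 * t * norm w + R"
  proof -
    have "(2 * t / E) * (E + R - 1) \<le> (2 * t / E) * (2 * inner e r)"
      using er \<open>E > 0\<close> assms(5) by (intro mult_left_mono) auto
    moreover have "2 * t * (- inner w r) \<le> 2 * t * norm w"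
      using wr assms(5) by (intro mult_left_mono) auto
    moreover have "2 * t * ((2 / E) * inner e r + inner w r)
        = (2 * t / E) * (2 * inner e r) + 2 * t * inner w r"
      by (simp add: distrib_left)
    ultimately show ?thesis by linarith
  qed
  also have "\<dots> = 1 + t * (t * norm v ^ 2 - 2 * (1 - norm w)) - (1 - R) * (1 - 2 * t / E)"
    using \<open>E > 0\<close> by (simp add: field_simps power2_eq_square)
  also have "\<dots> \<le> 1"
  proof -
    have "t * (t * norm v ^ 2 - 2 * (1 - norm w)) \<le> 0"
      using assms(5,7) by (simp add: mult_nonneg_nonpos)
    moreover have "0 \<le> (1 - R) * (1 - 2 * t / E)"
      using \<open>R \<le> 1\<close> \<open>E > 0\<close> assms(6) by (simp add: E_def)
    ultimately show ?thesis by linarith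
  qed
  finally show ?thesis by (simp add: dist_norm power_le_one_iff norm_minus_commute)
qed

lemma ball_dual_subset_supporting_cball:
  fixes K :: "'a::euclidean_space set"
  assumes "z \<in> ball_dual K" "norm u = 1" and normal: "\<And>y. y \<in> ball_dual K \<Longrightarrow> inner u (y - z) \<le> 0"
  shows "ball_dual K \<subseteq> cball (z - u) 1"
proof
  fix a assume a: "a \<in> ball_dual K"
  show "a \<in> cball (z - u) 1"
  proof (rule ccontr)
    assume "a \<notin> cball (z - u) 1"
    have "inner u u = 1" using \<open>norm u = 1\<close> by (simp add: norm_eq_1)
    define e where "e = a - z"
    define E s where "E = norm e ^ 2" and "s = inner e u"
    have "s \<le> 0" using normal[OF a] by (simp add: s_def e_def inner_commute)
    have "1 < norm (e + u)"
      using \<open>a \<notin> cball (z - u) 1\<close> by (simp add: e_def dist_norm norm_minus_commute algebra_simps)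
    then have "1 < norm (e + u) ^ 2" by (simp add: one_less_power)
    also have "norm (e + u) ^ 2 = E + 2 * s + 1"
      using \<open>inner u u = 1\<close> unfolding E_def s_def power2_norm_eq_inner
      by (simp add: inner_add inner_commute)
    finally have "0 < E + 2 * s" by simp
    then have "0 < E" using \<open>s \<le> 0\<close> by simp
    \<comment> \<open>\<mu> lies strictly between -2s/E and 1, so v below points into the open half-space
      beyond the supporting hyperplane while still being a spindle direction.\<close>
    define \<mu> where "\<mu> = 1 / 2 - s / E"
    have "0 < \<mu>" "\<mu> < 1" "0 < 2 * s / E + \<mu>"
      using \<open>0 < E\<close> \<open>s \<le> 0\<close> \<open>0 < E + 2 * s\<close> by (auto simp: \<mu>_def field_simps)
    define v where "v = (2 / norm e ^ 2) *\<^sub>R e + \<mu> *\<^sub>R u"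
    define t where "t = min (E / 2) (2 * (1 - \<mu>) / (norm v ^ 2 + 1))"
    have "0 < norm v ^ 2 + 1" by (simp add: add_nonneg_pos)
    then have "0 < 2 * (1 - \<mu>) / (norm v ^ 2 + 1)"
      using \<open>\<mu> < 1\<close> by simp
    then have "0 < t" using \<open>0 < E\<close> by (simp add: t_def)
    have "2 * t \<le> norm e ^ 2" by (simp add: t_def E_def)
    have "t * norm v ^ 2 \<le> 2 * (1 - norm (\<mu> *\<^sub>R u))"
    proof -
      have "t * norm v ^ 2 \<le> 2 * (1 - \<mu>) / (norm v ^ 2 + 1) * norm v ^ 2"
        by (intro mult_right_mono) (auto simp: t_def)
      also have "\<dots> = 2 * (1 - \<mu>) * (norm v ^ 2 / (norm v ^ 2 + 1))"
        by simp
      also have "\<dots> \<le> 2 * (1 - \<mu>)"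
        using \<open>\<mu> < 1\<close> \<open>0 < norm v ^ 2 + 1\<close> by (intro mult_left_le) auto
      finally show ?thesis using \<open>norm u = 1\<close> \<open>0 < \<mu>\<close> by simp
    qed
    have "z + t *\<^sub>R v \<in> ball_dual K"
      unfolding mem_ball_dual
    proof
      fix k assume "k \<in> K"
      have "0 \<in> cball (k - z) 1" "e \<in> cball (k - z) 1"
        using \<open>k \<in> K\<close> assms(1) a by (auto simp: mem_ball_dual e_def dist_norm algebra_simps)
      from unit_cball_contains_spindle_direction[OF this, of "\<mu> *\<^sub>R u" t]
      have "t *\<^sub>R v \<in> cball (k - z) 1"
        using \<open>0 < t\<close> \<open>2 * t \<le> norm e ^ 2\<close> \<open>t * norm v ^ 2 \<le> 2 * (1 - norm (\<mu> *\<^sub>R u))\<close>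
          \<open>norm u = 1\<close> \<open>\<mu> < 1\<close> \<open>0 < \<mu>\<close>
        by (simp add: v_def)
      then show "dist k (z + t *\<^sub>R v) \<le> 1" by (simp add: dist_norm algebra_simps)
    qed
    moreover have "inner u (z + t *\<^sub>R v - z) = t * (2 * s / E + \<mu>)"
      using \<open>inner u u = 1\<close> unfolding v_def E_def s_def
      by (simp add: inner_add_right inner_commute power2_norm_eq_inner[symmetric] algebra_simps)
    ultimately show False
      using normal \<open>0 < t\<close> \<open>0 < 2 * s / E + \<mu>\<close> by (metis mult_pos_pos not_le)
  qed
qed

lemma ball_dual_meets_cball:
  fixes K :: "'a::euclidean_space set"
  assumes "K \<in> spindle_class" "K \<noteq> UNIV" "K \<subseteq> cball x (1 + l)" "0 \<le> l"
  shows "ball_dual K \<inter> cball x l \<noteq> {}"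
proof (cases "x \<in> ball_dual K")
  case True
  with assms(4) show ?thesis by auto
next
  case False
  define C where "C = ball_dual K"
  have "closed C" "convex C" "C \<noteq> {}"
    using closed_ball_dual convex_ball_dual ball_dual_nonempty[OF assms(1,2)]
    by (auto simp: C_def)
  define z where "z = closest_point C x"
  have "z \<in> C" using closest_point_in_set[OF \<open>closed C\<close> \<open>C \<noteq> {}\<close>] by (simp add: z_def)
  define d where "d = dist x z"
  have "0 < d" using False \<open>z \<in> C\<close> by (auto simp: d_def C_def)
  define u where "u = (1 / d) *\<^sub>R (x - z)"
  have "x - z = d *\<^sub>R u" "norm u = 1" using \<open>0 < d\<close> by (auto simp: u_def d_def dist_norm)
  have "inner u (y - z) \<le> 0" if "y \<in> C" for y
    using closest_point_dot[OF \<open>convex C\<close> \<open>closed C\<close> that, of x] \<open>0 < d\<close>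
    by (simp add: u_def z_def divide_nonpos_pos)
  then have "C \<subseteq> cball (z - u) 1"
    using ball_dual_subset_supporting_cball \<open>z \<in> C\<close> \<open>norm u = 1\<close> unfolding C_def by blast
  then have "z - u \<in> ball_dual C"
    unfolding mem_ball_dual by (auto simp: dist_commute)
  then have "z - u \<in> K"
    using ball_dual_ball_dual_eq[OF assms(1)] by (simp add: C_def)
  moreover have "dist x (z - u) = d + 1"
  proof -
    have "x - (z - u) = (d + 1) *\<^sub>R u" using \<open>x - z = d *\<^sub>R u\<close> by (simp add: algebra_simps)
    then show ?thesis using \<open>norm u = 1\<close> \<open>0 < d\<close> by (simp add: dist_norm)
  qed
  ultimately have "d \<le> l" using assms(3) by auto
  with \<open>z \<in> C\<close> show ?thesis by (auto simp: C_def d_def)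
qed

definition parallel_body :: "'a::euclidean_space set \<Rightarrow> real \<Rightarrow> 'a set" where
  "parallel_body L r = {y + v | y v. y \<in> L \<and> v \<in> cball 0 r}"

lemma mem_parallel_body: "x \<in> parallel_body L r \<longleftrightarrow> (\<exists>y\<in>L. dist x y \<le> r)"
proof
  assume "x \<in> parallel_body L r"
  then show "\<exists>y\<in>L. dist x y \<le> r" by (force simp: parallel_body_def dist_norm norm_minus_commute)
next
  assume "\<exists>y\<in>L. dist x y \<le> r"
  then obtain y where "y \<in> L" "dist x y \<le> r" by blast
  then have "x = y + (x - y)" "x - y \<in> cball 0 r" by (auto simp: dist_norm norm_minus_commute)
  with \<open>y \<in> L\<close> show "x \<in> parallel_body L r" unfolding parallel_body_def by blast
qed

lemma hausdorff_dist_parallel_body: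
  "hausdorff_dist K L = Inf {r. 0 \<le> r \<and> K \<subseteq> parallel_body L r \<and> L \<subseteq> parallel_body K r}"
  by (simp add: hausdorff_dist_def parallel_body_def)

lemma ball_dual_subset_parallel_body:
  assumes "K \<in> spindle_class" "K \<noteq> UNIV" "0 \<le> r" "K \<subseteq> parallel_body L r"
  shows "ball_dual L \<subseteq> parallel_body (ball_dual K) r"
proof
  fix x assume "x \<in> ball_dual L"
  have "K \<subseteq> cball x (1 + r)"
  proof
    fix k assume "k \<in> K"
    then obtain y where "y \<in> L" "dist k y \<le> r" using assms(4) mem_parallel_body by blast
    moreover have "dist x y \<le> 1" using \<open>x \<in> ball_dual L\<close> \<open>y \<in> L\<close> by (metis mem_ball_dual dist_commute)
    ultimately show "k \<in> cball x (1 + r)"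
      using dist_triangle[of x k y] by (simp add: dist_commute)
  qed
  then obtain z where "z \<in> ball_dual K" "dist x z \<le> r"
    using ball_dual_meets_cball[OF assms(1,2) \<open>K \<subseteq> cball x (1 + r)\<close> assms(3)] by auto
  then show "x \<in> parallel_body (ball_dual K) r" unfolding mem_parallel_body by blast
qed

lemma subset_parallel_body_iff_ball_dual:
  assumes "K \<in> spindle_class" "K \<noteq> UNIV" "L \<in> spindle_class" "L \<noteq> {}" "0 \<le> r"
  shows "ball_dual L \<subseteq> parallel_body (ball_dual K) r \<longleftrightarrow> K \<subseteq> parallel_body L r"
proof
  assume "ball_dual L \<subseteq> parallel_body (ball_dual K) r"
  with ball_dual_subset_parallel_body[of "ball_dual L" r "ball_dual K"] assms
  show "K \<subseteq> parallel_body L r"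
    by (simp add: ball_dual_in_spindle_class ball_dual_eq_UNIV_iff ball_dual_ball_dual_eq)
qed (use ball_dual_subset_parallel_body assms in blast)

theorem proposition2p4:
  fixes K L :: "'a::euclidean_space set"
  assumes "K \<in> spindle_class" and "K \<noteq> UNIV" and "K \<noteq> {}"
      and "L \<in> spindle_class" and "L \<noteq> UNIV" and "L \<noteq> {}"
  shows "hausdorff_dist (ball_dual K) (ball_dual L) = hausdorff_dist K L"
proof -
  have "(ball_dual K \<subseteq> parallel_body (ball_dual L) r \<and> ball_dual L \<subseteq> parallel_body (ball_dual K) r)
      \<longleftrightarrow> (K \<subseteq> parallel_body L r \<and> L \<subseteq> parallel_body K r)" if "0 \<le> r" for r
    using subset_parallel_body_iff_ball_dual[OF assms(1,2,4,6) that]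
      subset_parallel_body_iff_ball_dual[OF assms(4,5,1,3) that] by blast
  then show ?thesis
    unfolding hausdorff_dist_parallel_body by (metis (lifting))
qed

end
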